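(* Let $P_1\subseteq P_2$ be meet semilattices with $0$ such that $P_1\subseteq P_2$ preserves finite covers. Suppose that for every $x\in P_2$ such that some element of $P_1$ is $\ge x$, there exist $y\in P_1$ with $x\le y$ and a finite set $\{y_1,\dots,y_n\}\subseteq P_1$ with $y_i\le y$ and $y_i\wedge x=0$ for all $i$, such that $\{y_1,\dots,y_n,x\}$ is a finite cover of $y$ in $P_2$. Then $P_1\subseteq P_2$ is tight, i.e. the image of the injective generalized Boolean algebra morphism $\mathcal T_c(P_1)\hookrightarrow\mathcal T_c(P_2)$, $U\mapsto re^{-1}(U)$, is an ideal of $\mathcal T_c(P_2)$.
   Context: A meet semilattice with $0$ is a meet semilattice with least element $0$; $P_1\subseteq P_2$ means an injective meet- and $0$-preserving map identifying $P_1$ with a subset of $P_2$. A filter of $P$ is a subset $F$ with $\emptyset\ne F\ne P$, closed upwards and under $\wedge$; $F(P)$ has the topology generated by $U_x=\{F:x\in F\}$, with basis of compact open sets $U_{(x:x_1,\dots,x_n)}=\{F:x\in F,\ x_1,\dots,x_n\notin F\}$. The tight filters $T(P)$ are the closure of the ultrafilters (maximal filters) in $F(P)$; $V^P_{(x:x_1,\dots,x_n)}=U_{(x:x_1,\dots,x_n)}\cap T(P)$, $V^P_x=V^P_{(x:)}$. $\mathcal T_c(P)$ is the generalized Boolean algebra of compact open subsets of the Hausdorff space $T(P)$. A finite cover of $x\in P$ is a finite set of elements $\le x$ such that every $0\ne y\le x$ meets one of them nontrivially. $P_1\subseteq P_2$ preserves finite covers if every finite cover in $P_1$ of $x\in P_1$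 is a finite cover of $x$ in $P_2$; in that case $re:\xi\mapsto\xi\cap P_1$ is a partial map $T(P_2)\dashrightarrow T(P_1)$ (defined when $\xi\cap P_1\ne\emptyset$), and $U\mapsto re^{-1}(U)$ is an injective generalized Boolean algebra morphism $\mathcal T_c(P_1)\to\mathcal T_c(P_2)$ sending $V^{P_1}_{(x:x_1,\dots,x_n)}\mapsto V^{P_2}_{(x:x_1,\dots,x_n)}$. An ideal of a generalized Boolean algebra $\mathcal B$ is a subset closed under joins and under meets with arbitrary elements of $\mathcal B$. *)

theory Defs
  imports "HOL-Analysis.Analysis"
begin

text \<open>Meet semilattices with 0 are modelled by the type class
  semilattice_inf + order_bot (bot = 0). A filter is a nonempty proper
  subset closed upwards and under meets.\<close>

definition is_filter :: "'a::{semilattice_inf,order_bot} set \<Rightarrow> bool" where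
  "is_filter F \<longleftrightarrow> F \<noteq> {} \<and> F \<noteq> UNIV
     \<and> (\<forall>x y. x \<in> F \<and> x \<le> y \<longrightarrow> y \<in> F)
     \<and> (\<forall>x y. x \<in> F \<and> y \<in> F \<longrightarrow> inf x y \<in> F)"

definition filters :: "'a::{semilattice_inf,order_bot} set set" where
  "filters = {F. is_filter F}"

definition ultrafilters :: "'a::{semilattice_inf,order_bot} set set" where
  "ultrafilters = {F. is_filter F \<and> (\<forall>G. is_filter G \<and> F \<subseteq> G \<longrightarrow> G = F)}"

definition basic_set :: "'a::{semilattice_inf,order_bot} \<Rightarrow> 'a set \<Rightarrow> 'a set set" where
  "basic_set x X = {F \<in> filters. x \<in> F \<and> X \<inter> F = {}}"

definition filter_topology :: "'a::{semilattice_inf,order_bot} set topology" where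
  "filter_topology = topology_generated_by {basic_set x X | x X. finite X}"

definition tight_filters :: "'a::{semilattice_inf,order_bot} set set" where
  "tight_filters = filter_topology closure_of ultrafilters"

definition tight_topology :: "'a::{semilattice_inf,order_bot} set topology" where
  "tight_topology = subtopology filter_topology tight_filters"

definition Tc :: "'a::{semilattice_inf,order_bot} set set set" where
  "Tc = {U. openin tight_topology U \<and> compactin tight_topology U}"

definition finite_cover :: "'a::{semilattice_inf,order_bot} set \<Rightarrow> 'a \<Rightarrow> bool" where
  "finite_cover C x \<longleftrightarrow> finite C \<and> (\<forall>c\<in>C. c \<le> x)
     \<and> (\<forall>y. y \<noteq> bot \<and> y \<le> x \<longrightarrow> (\<exists>c\<in>C. inf y c \<noteq> bot))"

definition semilattice_embedding ::
  "('a::{semilattice_inf,order_bot} \<Rightarrow> 'b::{semilattice_inf,order_bot}) \<Rightarrow> bool" where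
  "semilattice_embedding f \<longleftrightarrow> inj f \<and> f bot = bot \<and> (\<forall>x y. f (inf x y) = inf (f x) (f y))"

definition preserves_finite_covers ::
  "('a::{semilattice_inf,order_bot} \<Rightarrow> 'b::{semilattice_inf,order_bot}) \<Rightarrow> bool" where
  "preserves_finite_covers f \<longleftrightarrow>
     (\<forall>C x. finite_cover C x \<longrightarrow> finite_cover (f ` C) (f x))"

definition re_preimage ::
  "('a::{semilattice_inf,order_bot} \<Rightarrow> 'b::{semilattice_inf,order_bot}) \<Rightarrow> 'a set set \<Rightarrow> 'b set set" where
  "re_preimage f U = {\<xi> \<in> tight_filters. f -` \<xi> \<noteq> {} \<and> f -` \<xi> \<in> U}"

definition set_ideal :: "'c set set \<Rightarrow> 'c set set \<Rightarrow> bool" where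
  "set_ideal B I \<longleftrightarrow> I \<subseteq> B \<and> (\<forall>U\<in>I. \<forall>V\<in>I. U \<union> V \<in> I)
     \<and> (\<forall>U\<in>I. \<forall>W\<in>B. U \<inter> W \<in> I)"

definition tight_embedding ::
  "('a::{semilattice_inf,order_bot} \<Rightarrow> 'b::{semilattice_inf,order_bot}) \<Rightarrow> bool" where
  "tight_embedding f \<longleftrightarrow> set_ideal (Tc :: 'b set set set) (re_preimage f ` (Tc :: 'a set set set))"

end

theory Submission
  imports Defs
begin

text \<open>Tight filters are exactly the filters that meet every finite cover of each of their
  elements. Hence the restriction of a tight filter of P2 to P1 is tight, and re^-1 maps
  V^P1_(x:X) onto V^P2_(x:X); so the image of T_c(P1) is a ring of sets, whose members are
  the finite unions of the sets V^P2_(x:X) with x, X in P1. By hypothesis every V^P2_a with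
  a below an element of P1 equals some V^P2_(y:Y) with y, Y in P1, so it lies in the image,
  and then so does every V^P2_(a:A). Finally V^P2_(x:X) \<inter> V^P2_(y:Y) equals
  V^P2_(x:X) \<inter> V^P2_(inf x y:Y), and inf x y lies below x in P1; thus the image absorbs
  meets with arbitrary compact open sets.\<close>

section \<open>Filters\<close>

lemma is_filter_bot_notin: "is_filter F \<Longrightarrow> bot \<notin> F"
  unfolding is_filter_def by (metis UNIV_eq_I bot.extremum)

lemma is_filter_upD: "is_filter F \<Longrightarrow> x \<in> F \<Longrightarrow> x \<le> y \<Longrightarrow> y \<in> F"
  unfolding is_filter_def by blast

lemma is_filter_infD: "is_filter F \<Longrightarrow> x \<in> F \<Longrightarrow> y \<in> F \<Longrightarrow> inf x y \<in> F"
  unfolding is_filter_def by blast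

lemma is_filter_inf_iff: "is_filter F \<Longrightarrow> inf x y \<in> F \<longleftrightarrow> x \<in> F \<and> y \<in> F"
  by (meson is_filter_infD is_filter_upD inf.cobounded1 inf.cobounded2)

lemma is_filter_principal:
  assumes "w \<noteq> bot" shows "is_filter {z. w \<le> z}"
proof -
  have "bot \<notin> {z. w \<le> z}" using assms by (simp add: bot_unique)
  then show ?thesis unfolding is_filter_def by (auto intro: order_trans)
qed

lemma is_filter_Union_chain:
  assumes "C \<noteq> {}" and "subset.chain {F. is_filter F} C"
  shows "is_filter (\<Union>C)"
proof -
  have filters: "\<And>F. F \<in> C \<Longrightarrow> is_filter F"
    and linear: "\<And>F G. F \<in> C \<Longrightarrow> G \<in> C \<Longrightarrow> F \<subseteq> G \<or> G \<subseteq> F"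
    using assms(2) unfolding subset_chain_def by auto
  have "\<Union>C \<noteq> {}" using assms(1) filters unfolding is_filter_def by blast
  moreover have "\<Union>C \<noteq> UNIV" using filters is_filter_bot_notin by blast
  moreover have "y \<in> \<Union>C" if "x \<in> \<Union>C" "x \<le> y" for x y
    using that filters is_filter_upD by blast
  moreover have "inf x y \<in> \<Union>C" if "x \<in> F" "y \<in> G" "F \<in> C" "G \<in> C" for x y F G
    using linear[OF that(3,4)] that filters is_filter_infD by blast
  ultimately show ?thesis unfolding is_filter_def by blast
qed

lemma ultrafilter_exists:
  assumes "w \<noteq> bot"
  obtains \<eta> where "\<eta> \<in> ultrafilters" "w \<in> \<eta>"
proof -
  define A where "A = {F. is_filter F \<and> w \<in> F}"
  have "{z. w \<le> z} \<in> A" using is_filter_principal[OF assms] unfolding A_def by simp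
  then have "A \<noteq> {}" by blast
  moreover have "\<Union>C \<in> A" if C: "C \<noteq> {}" "subset.chain A C" for C
  proof -
    have "subset.chain {F. is_filter F} C"
      using C(2) unfolding A_def subset_chain_def by blast
    then have "is_filter (\<Union>C)" using is_filter_Union_chain[OF C(1)] by blast
    moreover have "w \<in> \<Union>C" using C unfolding A_def subset_chain_def by blast
    ultimately show ?thesis unfolding A_def by blast
  qed
  ultimately obtain M where M: "M \<in> A" "\<forall>X\<in>A. M \<subseteq> X \<longrightarrow> X = M"
    using subset_Zorn_nonempty[of A] by meson
  then have "M \<in> ultrafilters" unfolding A_def ultrafilters_def by blast
  with M(1) show ?thesis using that unfolding A_def by blast
qed

lemma ultrafilters_is_filter: "\<eta> \<in> ultrafilters \<Longrightarrow> is_filter \<eta>"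
  unfolding ultrafilters_def by simp

lemma ultrafilter_disjoint_element:
  assumes u: "\<eta> \<in> ultrafilters" and c: "c \<notin> \<eta>"
  shows "\<exists>u\<in>\<eta>. inf u c = bot"
proof (rule ccontr)
  assume "\<not> (\<exists>u\<in>\<eta>. inf u c = bot)"
  then have nonbot: "\<forall>u\<in>\<eta>. inf u c \<noteq> bot" by blast
  have f: "is_filter \<eta>" using u by (rule ultrafilters_is_filter)
  then obtain u0 where u0: "u0 \<in> \<eta>" unfolding is_filter_def by blast
  define G where "G = {z. \<exists>u\<in>\<eta>. inf u c \<le> z}"
  have "c \<in> G" using u0 unfolding G_def by auto
  moreover have "bot \<notin> G" using nonbot unfolding G_def by (auto simp: bot_unique)
  moreover have "inf x y \<in> G" if xy: "x \<in> G" "y \<in> G" for x y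
  proof -
    obtain u1 u2 where u12: "u1 \<in> \<eta>" "inf u1 c \<le> x" "u2 \<in> \<eta>" "inf u2 c \<le> y"
      using xy unfolding G_def by blast
    have "inf (inf u1 u2) c \<le> inf u1 c" "inf (inf u1 u2) c \<le> inf u2 c"
      by (rule inf_mono; simp)+
    then have "inf (inf u1 u2) c \<le> inf x y"
      using u12(2,4) by (blast intro: le_infI order.trans)
    moreover have "inf u1 u2 \<in> \<eta>" using f u12 is_filter_infD by blast
    ultimately show ?thesis unfolding G_def by blast
  qed
  ultimately have "is_filter G" unfolding is_filter_def G_def by (auto intro: order_trans)
  moreover have "\<eta> \<subseteq> G" unfolding G_def using inf.cobounded1 by blast
  ultimately have "G = \<eta>" using u unfolding ultrafilters_def by blast
  then show False using \<open>c \<in> G\<close> c by blast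
qed

lemma is_filter_finite_disjoint_element:
  assumes f: "is_filter \<eta>" and "finite C" and x: "x \<in> \<eta>"
    and disj: "\<forall>c\<in>C. \<exists>u\<in>\<eta>. inf u c = bot"
  shows "\<exists>w\<in>\<eta>. w \<le> x \<and> (\<forall>c\<in>C. inf w c = bot)"
  using \<open>finite C\<close> disj
proof (induction C rule: finite_induct)
  case empty
  then show ?case using x by blast
next
  case (insert c C)
  then obtain w where w: "w \<in> \<eta>" "w \<le> x" "\<forall>c\<in>C. inf w c = bot" by blast
  obtain u where u: "u \<in> \<eta>" "inf u c = bot" using insert.prems by blast
  have "inf (inf w u) c' = bot" if "c' \<in> insert c C" for c'
  proof -
    have "inf (inf w u) c \<le> inf u c" "inf (inf w u) c' \<le> inf w c'"
      by (rule inf_mono; simp)+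
    then show ?thesis using that u w(3) by (metis bot_unique insert_iff)
  qed
  moreover have "inf w u \<in> \<eta>" using f w u is_filter_infD by blast
  ultimately show ?case using w(2) by (meson inf.coboundedI1)
qed

section \<open>The topology of the filter space\<close>

lemma topspace_filter_topology: "topspace filter_topology = filters"
  unfolding filter_topology_def topology_generated_by_topspace
proof
  show "\<Union> {basic_set x X |x X. finite X} \<subseteq> filters" unfolding basic_set_def by auto
  show "filters \<subseteq> \<Union> {basic_set x X |x X. finite X}"
  proof
    fix F assume F: "F \<in> filters"
    then obtain x where "x \<in> F" unfolding filters_def is_filter_def by blast
    then have "F \<in> basic_set x {}" using F by (simp add: basic_set_def)
    then show "F \<in> \<Union> {basic_set x X |x X. finite X}" by blast
  qed
qed

lemma openin_basic_set: "finite X \<Longrightarrow> openin filter_topology (basic_set x X)"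
  unfolding filter_topology_def by (rule topology_generated_by_Basis) blast

lemma basic_set_Int:
  "basic_set x X \<inter> basic_set y Y = basic_set (inf x y) (X \<union> Y)"
proof -
  have "F \<in> basic_set x X \<inter> basic_set y Y \<longleftrightarrow> F \<in> basic_set (inf x y) (X \<union> Y)" for F
  proof (cases "is_filter F")
    case True
    then show ?thesis
      using is_filter_inf_iff[OF True, of x y] by (auto simp: basic_set_def filters_def)
  qed (simp add: basic_set_def filters_def)
  then show ?thesis by blast
qed

lemma generate_topology_on_basic_set:
  assumes "generate_topology_on {basic_set x X | x X. finite X} U" "F \<in> U"
  shows "\<exists>x X. finite X \<and> F \<in> basic_set x X \<and> basic_set x X \<subseteq> U"
  using assms
proof (induction rule: generate_topology_on.induct)
  case Empty
  then show ?case by simp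
next
  case (Int a b)
  then have "F \<in> a" "F \<in> b" by simp_all
  obtain x X where "finite X" "F \<in> basic_set x X" "basic_set x X \<subseteq> a"
    using Int.IH(1)[OF \<open>F \<in> a\<close>] by blast
  obtain y Y where "finite Y" "F \<in> basic_set y Y" "basic_set y Y \<subseteq> b"
    using Int.IH(2)[OF \<open>F \<in> b\<close>] by blast
  then have "F \<in> basic_set (inf x y) (X \<union> Y)" "basic_set (inf x y) (X \<union> Y) \<subseteq> a \<inter> b"
    using \<open>F \<in> basic_set x X\<close> \<open>basic_set x X \<subseteq> a\<close>
    unfolding basic_set_Int[symmetric] by blast+
  moreover have "finite (X \<union> Y)" using \<open>finite X\<close> \<open>finite Y\<close> by simp
  ultimately show ?case by blast
next
  case (UN K)
  then obtain k where "k \<in> K" "F \<in> k" by blast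
  with UN.IH obtain x X where "finite X" "F \<in> basic_set x X" "basic_set x X \<subseteq> k" by blast
  then show ?case using \<open>k \<in> K\<close> by blast
next
  case (Basis s)
  then show ?case by blast
qed

lemma openin_filter_topology_basic_set:
  assumes "openin filter_topology U" "F \<in> U"
  obtains x X where "finite X" "F \<in> basic_set x X" "basic_set x X \<subseteq> U"
proof -
  have "generate_topology_on {basic_set x X | x X. finite X} U"
    using assms(1) unfolding filter_topology_def by (rule openin_topology_generated_by)
  from generate_topology_on_basic_set[OF this assms(2)] that show ?thesis by blast
qed

text \<open>Compactness of the basic sets comes from Tychonoff: filters are points of the compact
  space of predicates on P, and the filters in basic_set x X form a closed subset of it.\<close>

definition predicate_space :: "('a \<Rightarrow> bool) topology" where
  "predicate_space = product_topology (\<lambda>_. discrete_topology UNIV) UNIV"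

lemma topspace_predicate_space [simp]: "topspace predicate_space = UNIV"
  by (simp add: predicate_space_def)

lemma compact_space_predicate_space: "compact_space predicate_space"
  unfolding predicate_space_def
  by (simp add: compact_space_product_topology compact_space_discrete_topology)

lemma continuous_map_predicate_space_eval:
  "continuous_map predicate_space (discrete_topology UNIV) (\<lambda>p. p a)"
  unfolding predicate_space_def by (rule continuous_map_product_projection) simp

lemma openin_predicate_space_eval: "openin predicate_space {p. p a = v}"
  using openin_continuous_map_preimage[OF continuous_map_predicate_space_eval, of "{v}" a]
  by simp

lemma closedin_predicate_space_eval: "closedin predicate_space {p. p a = v}"
  using closedin_continuous_map_preimage[OF continuous_map_predicate_space_eval, of "{v}" a]
  by simp

lemma openin_predicate_space_basic:
  "finite Y \<Longrightarrow> openin predicate_space {q. q y \<and> (\<forall>z\<in>Y. \<not> q z)}"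
proof (induction Y rule: finite_induct)
  case empty
  then show ?case using openin_predicate_space_eval[of y True] by simp
next
  case (insert w Y)
  have "{q. q y \<and> (\<forall>z\<in>insert w Y. \<not> q z)} = {q. q y \<and> (\<forall>z\<in>Y. \<not> q z)} \<inter> {q. q w = False}"
    by auto
  then show ?case using insert.IH openin_predicate_space_eval[of w False] by (simp add: openin_Int)
qed

lemma Collect_in_basic_set_iff:
  "Collect p \<in> basic_set x X \<longleftrightarrow> p x \<and> \<not> p bot \<and> (\<forall>z\<in>X. \<not> p z)
     \<and> (\<forall>a b. a \<le> b \<longrightarrow> p a \<longrightarrow> p b) \<and> (\<forall>a b. p a \<longrightarrow> p b \<longrightarrow> p (inf a b))"
  (is "?lhs \<longleftrightarrow> ?rhs")
proof
  assume ?lhs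
  then have f: "is_filter (Collect p)" and "p x" "\<forall>z\<in>X. \<not> p z"
    by (auto simp: basic_set_def filters_def)
  moreover have "\<not> p bot" using is_filter_bot_notin[OF f] by simp
  moreover have "\<forall>a b. a \<le> b \<longrightarrow> p a \<longrightarrow> p b" "\<forall>a b. p a \<longrightarrow> p b \<longrightarrow> p (inf a b)"
    using f unfolding is_filter_def by auto
  ultimately show ?rhs by blast
next
  assume rhs: ?rhs
  then have "Collect p \<noteq> {}" "Collect p \<noteq> UNIV"
    and up: "\<forall>a b. a \<le> b \<longrightarrow> p a \<longrightarrow> p b" and inf: "\<forall>a b. p a \<longrightarrow> p b \<longrightarrow> p (inf a b)"
    by auto
  then have "is_filter (Collect p)" unfolding is_filter_def by auto
  then show ?lhs using rhs by (auto simp: basic_set_def filters_def)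
qed

lemma closedin_predicate_space_basic: "closedin predicate_space {p. Collect p \<in> basic_set x X}"
proof -
  have closed_eval: "closedin predicate_space {p. p a}" "closedin predicate_space {p. \<not> p a}" for a
    using closedin_predicate_space_eval[of a True] closedin_predicate_space_eval[of a False]
    by simp_all
  define K where "K = {{p. p x}, {p. \<not> p bot}} \<union> {{p. \<not> p z} | z. z \<in> X}
     \<union> {{p. \<not> p a} \<union> {p. p b} | a b. a \<le> b}
     \<union> {{p. \<not> p a} \<union> {p. \<not> p b} \<union> {p. p (inf a b)} | a b. True}"
  have "closedin predicate_space (\<Inter>K)"
    by (rule closedin_Inter) (auto simp: K_def closed_eval intro!: closedin_Un)
  moreover have "\<Inter>K = {p. Collect p \<in> basic_set x X}"
  proof (rule set_eqI)
    fix q :: "'a \<Rightarrow> bool"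
    have Inter_compr: "q \<in> \<Inter>{S z | z. P z} \<longleftrightarrow> (\<forall>z. P z \<longrightarrow> q \<in> S z)"
      "q \<in> \<Inter>{T a b | a b. R a b} \<longleftrightarrow> (\<forall>a b. R a b \<longrightarrow> q \<in> T a b)"
      for S :: "'a \<Rightarrow> ('a \<Rightarrow> bool) set" and T :: "'a \<Rightarrow> 'a \<Rightarrow> ('a \<Rightarrow> bool) set" and P R
      by blast+
    have "q \<in> \<Inter>K \<longleftrightarrow> q x \<and> \<not> q bot \<and> (\<forall>z\<in>X. \<not> q z)
        \<and> (\<forall>a b. a \<le> b \<longrightarrow> q a \<longrightarrow> q b) \<and> (\<forall>a b. q a \<longrightarrow> q b \<longrightarrow> q (inf a b))"
      unfolding K_def Inter_Un_distrib Int_iff Inter_compr by (simp add: Ball_def)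
    then show "q \<in> \<Inter>K \<longleftrightarrow> q \<in> {p. Collect p \<in> basic_set x X}"
      by (simp add: Collect_in_basic_set_iff)
  qed
  ultimately show ?thesis by simp
qed

lemma continuous_map_Collect_filter_topology:
  assumes "S \<subseteq> {p. Collect p \<in> filters}"
  shows "continuous_map (subtopology predicate_space S) filter_topology Collect"
  unfolding continuous_map
proof (intro conjI allI impI)
  show "Collect ` topspace (subtopology predicate_space S) \<subseteq> topspace filter_topology"
    using assms by (auto simp: topspace_filter_topology)
  fix U :: "'a set set"
  assume U: "openin filter_topology U"
  show "openin (subtopology predicate_space S) {p \<in> topspace (subtopology predicate_space S). Collect p \<in> U}"
  proof (subst openin_subopen, intro ballI)
    fix p assume p: "p \<in> {p \<in> topspace (subtopology predicate_space S). Collect p \<in> U}"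
    then have "Collect p \<in> U" by simp
    then obtain y Y where yY: "finite Y" "Collect p \<in> basic_set y Y" "basic_set y Y \<subseteq> U"
      by (rule openin_filter_topology_basic_set[OF U])
    define T where "T = {q. q y \<and> (\<forall>z\<in>Y. \<not> q z)} \<inter> S"
    have "openin (subtopology predicate_space S) T"
      unfolding T_def by (rule openin_subtopology_Int[OF openin_predicate_space_basic[OF yY(1)]])
    moreover have "p \<in> T" using p yY(2) unfolding T_def Collect_in_basic_set_iff by auto
    moreover have "Collect q \<in> basic_set y Y" if q: "q \<in> T" for q
    proof -
      have "Collect q \<in> filters" using q assms unfolding T_def by blast
      then show ?thesis using q unfolding T_def basic_set_def by blast
    qed
    then have "T \<subseteq> {p \<in> topspace (subtopology predicate_space S). Collect p \<in> U}"
      using yY(3) unfolding T_def by auto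
    ultimately show "\<exists>T. openin (subtopology predicate_space S) T \<and> p \<in> T
        \<and> T \<subseteq> {p \<in> topspace (subtopology predicate_space S). Collect p \<in> U}"
      by blast
  qed
qed

lemma compactin_basic_set: "compactin filter_topology (basic_set x X)"
proof -
  define S where "S = {p. Collect p \<in> basic_set x X}"
  have "compactin predicate_space S"
    unfolding S_def
    by (rule closedin_compact_space[OF compact_space_predicate_space closedin_predicate_space_basic])
  then have "compactin (subtopology predicate_space S) S" by (simp add: compactin_subtopology)
  moreover have "S \<subseteq> {p. Collect p \<in> filters}" unfolding S_def basic_set_def by auto
  ultimately have "compactin filter_topology (Collect ` S)"
    by (metis image_compactin continuous_map_Collect_filter_topology)
  moreover have "Collect ` S = basic_set x X"
  proof
    show "Collect ` S \<subseteq> basic_set x X" unfolding S_def by auto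
    show "basic_set x X \<subseteq> Collect ` S"
    proof
      fix F assume "F \<in> basic_set x X"
      then have "(\<lambda>a. a \<in> F) \<in> S" unfolding S_def by simp
      then show "F \<in> Collect ` S" by (metis Collect_mem_eq image_eqI)
    qed
  qed
  ultimately show ?thesis by simp
qed

lemma Hausdorff_space_filter_topology: "Hausdorff_space filter_topology"
  unfolding Hausdorff_space_def topspace_filter_topology
proof (intro allI impI)
  have separate: "\<exists>U V. openin filter_topology U \<and> openin filter_topology V
      \<and> F \<in> U \<and> G \<in> V \<and> disjnt U V"
    if FG: "F \<in> filters" "G \<in> filters" "x \<in> F" "x \<notin> G" for F G :: "'a set" and x
  proof -
    obtain g where "g \<in> G" using FG(2) unfolding filters_def is_filter_def by blast
    then have "F \<in> basic_set x {}" "G \<in> basic_set g {x}"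
      using FG by (auto simp: basic_set_def)
    moreover have "disjnt (basic_set x {}) (basic_set g {x})"
      by (auto simp: basic_set_def disjnt_def)
    ultimately show ?thesis using openin_basic_set[of "{}" x] openin_basic_set[of "{x}" g] by blast
  qed
  fix F G :: "'a set" assume FG: "F \<in> filters \<and> G \<in> filters \<and> F \<noteq> G"
  then obtain x where "(x \<in> F \<and> x \<notin> G) \<or> (x \<in> G \<and> x \<notin> F)" by blast
  then show "\<exists>U V. openin filter_topology U \<and> openin filter_topology V \<and> F \<in> U \<and> G \<in> V \<and> disjnt U V"
  proof
    assume "x \<in> F \<and> x \<notin> G"
    then show ?thesis using separate[of F G x] FG by blast
  next
    assume "x \<in> G \<and> x \<notin> F"
    then obtain U V where "openin filter_topology U" "openin filter_topology V"
      "G \<in> U" "F \<in> V" "disjnt U V" using separate[of G F x] FG by blast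
    then show ?thesis using disjnt_sym by blast
  qed
qed

section \<open>Tight filters and compact open sets\<close>

definition tight_basic_set :: "'a::{semilattice_inf,order_bot} \<Rightarrow> 'a set \<Rightarrow> 'a set set" where
  "tight_basic_set x X = basic_set x X \<inter> tight_filters"

definition meets_finite_covers :: "'a::{semilattice_inf,order_bot} set \<Rightarrow> bool" where
  "meets_finite_covers \<xi> \<longleftrightarrow> (\<forall>x\<in>\<xi>. \<forall>C. finite_cover C x \<longrightarrow> C \<inter> \<xi> \<noteq> {})"

lemma tight_filters_subset_filters: "tight_filters \<subseteq> filters"
  unfolding tight_filters_def using closure_of_subset_topspace topspace_filter_topology by metis

lemma topspace_tight_topology: "topspace tight_topology = tight_filters"
  unfolding tight_topology_def using tight_filters_subset_filters topspace_filter_topology by auto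

lemma tight_basic_set_in_Tc: "finite X \<Longrightarrow> tight_basic_set x X \<in> Tc"
proof -
  assume "finite X"
  have "openin tight_topology (tight_basic_set x X)"
    unfolding tight_topology_def tight_basic_set_def
    by (rule openin_subtopology_Int[OF openin_basic_set[OF \<open>finite X\<close>]])
  moreover have "compactin filter_topology (tight_basic_set x X)"
    unfolding tight_basic_set_def tight_filters_def
    by (rule compact_Int_closedin[OF compactin_basic_set closedin_closure_of])
  then have "compactin tight_topology (tight_basic_set x X)"
    unfolding tight_topology_def tight_basic_set_def by (simp add: compactin_subtopology)
  ultimately show ?thesis unfolding Tc_def by simp
qed

text \<open>Compact sets are closed in the Hausdorff space of tight filters, so T_c is closed under
  differences.\<close>

lemma ring_of_sets_Tc: "ring_of_sets tight_filters Tc"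
proof (rule ring_of_setsI)
  have Hausdorff: "Hausdorff_space tight_topology"
    unfolding tight_topology_def by (rule Hausdorff_space_subtopology[OF Hausdorff_space_filter_topology])
  show "Tc \<subseteq> Pow tight_filters"
    unfolding Tc_def using openin_subset topspace_tight_topology by blast
  show "{} \<in> Tc" unfolding Tc_def by simp
  show "U \<union> V \<in> Tc" if "U \<in> Tc" "V \<in> Tc" for U V
    using that unfolding Tc_def by (auto intro: compactin_Un)
  show "U - V \<in> Tc" if U: "U \<in> Tc" and V: "V \<in> Tc" for U V
  proof -
    have "closedin tight_topology V"
      using V compactin_imp_closedin[OF Hausdorff] unfolding Tc_def by blast
    then have "openin tight_topology (U - V)" using U unfolding Tc_def by blast
    moreover have "closedin tight_topology (U - V)"
      using U V compactin_imp_closedin[OF Hausdorff] unfolding Tc_def by blast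
    then have "compactin tight_topology (U - V)"
      using closed_compactin[of tight_topology U "U - V"] U unfolding Tc_def by blast
    ultimately show ?thesis unfolding Tc_def by blast
  qed
qed

lemma Tc_finite_Union_tight_basic_set:
  assumes "U \<in> Tc"
  obtains S where "finite S" "\<forall>p\<in>S. finite (snd p)"
    "U = (\<Union>p\<in>S. tight_basic_set (fst p) (snd p))"
proof -
  define V where "V = (\<lambda>p. tight_basic_set (fst p) (snd p) :: 'a set set)"
  define A where "A = {p. finite (snd p) \<and> V p \<subseteq> U}"
  have "openin tight_topology U" and compact: "compactin tight_topology U"
    using assms unfolding Tc_def by auto
  then obtain O' where O': "openin filter_topology O'" "U = O' \<inter> tight_filters"
    unfolding tight_topology_def openin_subtopology by blast
  have "U \<subseteq> \<Union>(V ` A)"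
  proof
    fix F assume "F \<in> U"
    then obtain x X where "finite X" "F \<in> basic_set x X" "basic_set x X \<subseteq> O'"
      using openin_filter_topology_basic_set[OF O'(1)] O'(2) by blast
    then have "(x, X) \<in> A" "F \<in> V (x, X)"
      using \<open>F \<in> U\<close> O'(2) unfolding A_def V_def tight_basic_set_def by auto
    then show "F \<in> \<Union>(V ` A)" by blast
  qed
  moreover have "\<forall>B\<in>V ` A. openin tight_topology B"
    using tight_basic_set_in_Tc unfolding A_def V_def Tc_def by auto
  ultimately obtain \<F> where \<F>: "finite \<F>" "\<F> \<subseteq> V ` A" "U \<subseteq> \<Union>\<F>"
    using compact unfolding compactin_def by meson
  then obtain S where "S \<subseteq> A" "finite S" "\<F> = V ` S"
    using finite_subset_image by meson
  moreover from this have "U \<subseteq> \<Union>(V ` S)" using \<F>(3) by simp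
  moreover have "\<Union>(V ` S) \<subseteq> U" using \<open>S \<subseteq> A\<close> unfolding A_def by auto
  ultimately have "U = \<Union>(V ` S)" "\<forall>p\<in>S. finite (snd p)"
    using \<open>S \<subseteq> A\<close> unfolding A_def by auto
  then show ?thesis using that \<open>finite S\<close> unfolding V_def by blast
qed

lemma tight_filter_meets_finite_covers:
  assumes "\<xi> \<in> tight_filters"
  shows "meets_finite_covers \<xi>"
  unfolding meets_finite_covers_def
proof (intro ballI allI impI)
  fix x C assume x: "x \<in> \<xi>" and C: "finite_cover C x"
  show "C \<inter> \<xi> \<noteq> {}"
  proof
    assume "C \<inter> \<xi> = {}"
    have "finite C" using C unfolding finite_cover_def by blast
    have "\<xi> \<in> filters" using assms tight_filters_subset_filters by blast
    then have "\<xi> \<in> basic_set x C" using x \<open>C \<inter> \<xi> = {}\<close> by (simp add: basic_set_def)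
    then obtain \<eta> where \<eta>: "\<eta> \<in> ultrafilters" "\<eta> \<in> basic_set x C"
      using assms openin_basic_set[OF \<open>finite C\<close>] unfolding tight_filters_def in_closure_of by blast
    then have f\<eta>: "is_filter \<eta>" and "x \<in> \<eta>" "C \<inter> \<eta> = {}"
      using ultrafilters_is_filter by (auto simp: basic_set_def)
    then have "\<forall>c\<in>C. \<exists>u\<in>\<eta>. inf u c = bot" using ultrafilter_disjoint_element[OF \<eta>(1)] by blast
    then obtain w where w: "w \<in> \<eta>" "w \<le> x" "\<forall>c\<in>C. inf w c = bot"
      using is_filter_finite_disjoint_element[OF f\<eta> \<open>finite C\<close> \<open>x \<in> \<eta>\<close>] by blast
    have "w \<noteq> bot" using is_filter_bot_notin[OF f\<eta>] w(1) by blast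
    then show False using C w(2,3) unfolding finite_cover_def by blast
  qed
qed

text \<open>If \<xi> were not tight, some basic neighbourhood basic_set y Y of \<xi> would contain no
  ultrafilter; then {inf y z | z \<in> Y} fails to cover y, and an ultrafilter through a witness
  of this failure lies in basic_set y Y.\<close>

lemma meets_finite_covers_tight_filter:
  assumes f: "is_filter \<xi>" and c: "meets_finite_covers \<xi>"
  shows "\<xi> \<in> tight_filters"
  unfolding tight_filters_def in_closure_of
proof (intro conjI allI impI)
  show "\<xi> \<in> topspace filter_topology" using f by (simp add: topspace_filter_topology filters_def)
  fix T assume T: "\<xi> \<in> T \<and> openin filter_topology T"
  then obtain y Y where yY: "finite Y" "\<xi> \<in> basic_set y Y" "basic_set y Y \<subseteq> T"
    using openin_filter_topology_basic_set[of T \<xi>] by blast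
  then have y: "y \<in> \<xi>" and Y: "Y \<inter> \<xi> = {}" by (auto simp: basic_set_def)
  define C where "C = inf y ` Y"
  have "\<not> finite_cover C y"
  proof
    assume "finite_cover C y"
    then have "C \<inter> \<xi> \<noteq> {}" using c y unfolding meets_finite_covers_def by blast
    then obtain z where "z \<in> Y" "inf y z \<in> \<xi>" unfolding C_def by blast
    then have "z \<in> \<xi>" using is_filter_inf_iff[OF f] by blast
    then show False using Y \<open>z \<in> Y\<close> by blast
  qed
  moreover have "finite C" "\<forall>c\<in>C. c \<le> y" using yY(1) unfolding C_def by auto
  ultimately obtain w where w: "w \<noteq> bot" "w \<le> y" "\<forall>c\<in>C. inf w c = bot"
    unfolding finite_cover_def by blast
  obtain \<eta> where \<eta>: "\<eta> \<in> ultrafilters" "w \<in> \<eta>" using ultrafilter_exists[OF w(1)] by blast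
  have f\<eta>: "is_filter \<eta>" using \<eta>(1) by (rule ultrafilters_is_filter)
  have "Y \<inter> \<eta> = {}"
  proof (rule ccontr)
    assume "Y \<inter> \<eta> \<noteq> {}"
    then obtain z where z: "z \<in> Y" "z \<in> \<eta>" by blast
    have "inf w z \<in> \<eta>" using is_filter_infD[OF f\<eta> \<eta>(2) z(2)] .
    moreover have "inf w z = inf w (inf y z)" using w(2) by (simp add: inf.absorb1 inf_assoc[symmetric])
    moreover have "inf w (inf y z) = bot" using w(3) z(1) unfolding C_def by blast
    ultimately show False using is_filter_bot_notin[OF f\<eta>] by simp
  qed
  moreover have "y \<in> \<eta>" using is_filter_upD[OF f\<eta> \<eta>(2) w(2)] .
  ultimately have "\<eta> \<in> basic_set y Y" using f\<eta> by (simp add: basic_set_def filters_def)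
  then show "\<exists>\<eta>. \<eta> \<in> ultrafilters \<and> \<eta> \<in> T" using \<eta>(1) yY(3) by blast
qed

lemma tight_filters_iff: "\<xi> \<in> tight_filters \<longleftrightarrow> is_filter \<xi> \<and> meets_finite_covers \<xi>"
  using tight_filter_meets_finite_covers meets_finite_covers_tight_filter
    tight_filters_subset_filters filters_def by blast

lemma tight_filters_is_filter: "\<xi> \<in> tight_filters \<Longrightarrow> is_filter \<xi>"
  by (simp add: tight_filters_iff)

lemma tight_basic_set_iff:
  "\<xi> \<in> tight_basic_set x X \<longleftrightarrow> \<xi> \<in> tight_filters \<and> x \<in> \<xi> \<and> X \<inter> \<xi> = {}"
  using tight_filters_subset_filters by (auto simp: tight_basic_set_def basic_set_def)

section \<open>Restriction of tight filters\<close>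

lemma semilattice_embedding_mono:
  assumes "semilattice_embedding f" "a \<le> b"
  shows "f a \<le> f b"
proof -
  have "f a = f (inf a b)" using assms(2) by (simp add: inf.absorb1)
  also have "\<dots> = inf (f a) (f b)" using assms(1) unfolding semilattice_embedding_def by blast
  finally show ?thesis by (simp add: le_iff_inf)
qed

lemma re_preimage_Un: "re_preimage f (U \<union> V) = re_preimage f U \<union> re_preimage f V"
  unfolding re_preimage_def by auto

lemma re_preimage_Diff: "re_preimage f (U - V) = re_preimage f U - re_preimage f V"
  unfolding re_preimage_def by auto

lemma re_preimage_UN: "re_preimage f (\<Union>i\<in>I. U i) = (\<Union>i\<in>I. re_preimage f (U i))"
  unfolding re_preimage_def by auto

locale cover_preserving_embedding =
  fixes f :: "'a::{semilattice_inf,order_bot} \<Rightarrow> 'b::{semilattice_inf,order_bot}"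
  assumes embedding: "semilattice_embedding f"
    and preserves_covers: "preserves_finite_covers f"
begin

abbreviation tight_image :: "'b set set set" where
  "tight_image \<equiv> re_preimage f ` Tc"

lemma is_filter_vimage:
  assumes \<xi>: "is_filter \<xi>" and "f -` \<xi> \<noteq> {}"
  shows "is_filter (f -` \<xi>)"
  unfolding is_filter_def
proof (intro conjI allI impI)
  have "f bot = bot" using embedding unfolding semilattice_embedding_def by blast
  then have "bot \<notin> f -` \<xi>" using is_filter_bot_notin[OF \<xi>] by simp
  then show "f -` \<xi> \<noteq> UNIV" by blast
  show "y \<in> f -` \<xi>" if "x \<in> f -` \<xi> \<and> x \<le> y" for x y
    using that is_filter_upD[OF \<xi>] semilattice_embedding_mono[OF embedding] by blast
  show "inf x y \<in> f -` \<xi>" if "x \<in> f -` \<xi> \<and> y \<in> f -` \<xi>" for x y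
    using that is_filter_infD[OF \<xi>] embedding unfolding semilattice_embedding_def by simp
qed (rule assms(2))

lemma vimage_tight_filter:
  assumes "\<xi> \<in> tight_filters" "f -` \<xi> \<noteq> {}"
  shows "f -` \<xi> \<in> tight_filters"
proof -
  have "meets_finite_covers \<xi>" "is_filter \<xi>" using assms(1) tight_filters_iff by blast+
  then have "meets_finite_covers (f -` \<xi>)"
    using preserves_covers unfolding meets_finite_covers_def preserves_finite_covers_def by blast
  then show ?thesis using tight_filters_iff is_filter_vimage[OF \<open>is_filter \<xi>\<close> assms(2)] by blast
qed

lemma re_preimage_tight_basic_set:
  "re_preimage f (tight_basic_set x X) = tight_basic_set (f x) (f ` X)"
proof (intro set_eqI iffI)
  fix \<xi> assume "\<xi> \<in> re_preimage f (tight_basic_set x X)"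
  then show "\<xi> \<in> tight_basic_set (f x) (f ` X)"
    unfolding re_preimage_def tight_basic_set_iff by blast
next
  fix \<xi> assume \<xi>: "\<xi> \<in> tight_basic_set (f x) (f ` X)"
  then have "\<xi> \<in> tight_filters" "f -` \<xi> \<noteq> {}" by (auto simp: tight_basic_set_iff)
  then have "f -` \<xi> \<in> tight_filters" by (rule vimage_tight_filter)
  then show "\<xi> \<in> re_preimage f (tight_basic_set x X)"
    using \<xi> unfolding re_preimage_def tight_basic_set_iff by blast
qed

lemma ring_of_sets_tight_image: "ring_of_sets tight_filters tight_image"
proof (rule ring_of_setsI)
  interpret Tc: ring_of_sets tight_filters "Tc :: 'a set set set" by (rule ring_of_sets_Tc)
  show "tight_image \<subseteq> Pow tight_filters" unfolding re_preimage_def by blast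
  have "re_preimage f {} = {}" unfolding re_preimage_def by simp
  then show "{} \<in> tight_image" using Tc.empty_sets by (metis image_eqI)
  show "A \<union> B \<in> tight_image" if AB: "A \<in> tight_image" "B \<in> tight_image" for A B
  proof -
    obtain U V where "U \<in> Tc" "V \<in> Tc" "A = re_preimage f U" "B = re_preimage f V"
      using AB by blast
    then show ?thesis by (simp only: re_preimage_Un[symmetric]) (rule imageI, rule Tc.Un)
  qed
  show "A - B \<in> tight_image" if AB: "A \<in> tight_image" "B \<in> tight_image" for A B
  proof -
    obtain U V where "U \<in> Tc" "V \<in> Tc" "A = re_preimage f U" "B = re_preimage f V"
      using AB by blast
    then show ?thesis by (simp only: re_preimage_Diff[symmetric]) (rule imageI, rule Tc.Diff)
  qed
qed

lemma tight_image_finite_Union_tight_basic_set: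
  assumes "A \<in> tight_image"
  obtains S where "finite S" "\<forall>p\<in>S. finite (snd p)"
    "A = (\<Union>p\<in>S. tight_basic_set (f (fst p)) (f ` snd p))"
proof -
  obtain U where U: "U \<in> Tc" "A = re_preimage f U" using assms by blast
  obtain S where S: "finite S" "\<forall>p\<in>S. finite (snd p)"
    "U = (\<Union>p\<in>S. tight_basic_set (fst p) (snd p))"
    using U(1) by (rule Tc_finite_Union_tight_basic_set)
  have "A = (\<Union>p\<in>S. tight_basic_set (f (fst p)) (f ` snd p))"
    unfolding U(2) S(3) re_preimage_UN re_preimage_tight_basic_set ..
  with S(1,2) show ?thesis by (rule that)
qed

lemma tight_image_subset_Tc: "tight_image \<subseteq> Tc"
proof
  interpret Tc: ring_of_sets tight_filters "Tc :: 'b set set set" by (rule ring_of_sets_Tc)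
  fix A assume "A \<in> tight_image"
  then obtain S where "finite S" "\<forall>p\<in>S. finite (snd p)"
    "A = (\<Union>p\<in>S. tight_basic_set (f (fst p)) (f ` snd p))"
    by (rule tight_image_finite_Union_tight_basic_set)
  then show "A \<in> Tc" by (auto intro!: Tc.finite_UN tight_basic_set_in_Tc)
qed

end

locale tight_inclusion = cover_preserving_embedding +
  assumes complemented_cover: "\<forall>x::'b. (\<exists>z. x \<le> f z) \<longrightarrow>
           (\<exists>y Y. x \<le> f y \<and> finite Y \<and> (\<forall>yi\<in>Y. yi \<le> y \<and> inf (f yi) x = bot)
                 \<and> finite_cover (insert x (f ` Y)) (f y))"
begin

sublocale tight_image: ring_of_sets tight_filters tight_image
  by (rule ring_of_sets_tight_image)

text \<open>A tight filter containing f y and avoiding f ` Y meets the cover insert a (f ` Y) of f y,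
  so it contains a; conversely a filter containing a avoids each f yi, since inf (f yi) a = bot.\<close>

lemma principal_tight_basic_set_in_tight_image:
  assumes "a \<le> f z"
  shows "tight_basic_set a {} \<in> tight_image"
proof -
  obtain y Y where yY: "a \<le> f y" "finite Y" "\<forall>yi\<in>Y. yi \<le> y \<and> inf (f yi) a = bot"
    "finite_cover (insert a (f ` Y)) (f y)"
    using complemented_cover[rule_format, of a] assms by blast
  have "tight_basic_set a {} = tight_basic_set (f y) (f ` Y)"
  proof (intro set_eqI iffI)
    fix \<xi> assume \<xi>: "\<xi> \<in> tight_basic_set a {}"
    then have f\<xi>: "is_filter \<xi>" and "a \<in> \<xi>"
      by (auto simp: tight_basic_set_iff tight_filters_is_filter)
    then have "f y \<in> \<xi>" using is_filter_upD yY(1) by blast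
    moreover have "f yi \<notin> \<xi>" if "yi \<in> Y" for yi
    proof
      assume "f yi \<in> \<xi>"
      then have "inf (f yi) a \<in> \<xi>" using is_filter_infD[OF f\<xi> _ \<open>a \<in> \<xi>\<close>] by blast
      moreover have "inf (f yi) a = bot" using yY(3) \<open>yi \<in> Y\<close> by blast
      ultimately show False using is_filter_bot_notin[OF f\<xi>] by simp
    qed
    ultimately show "\<xi> \<in> tight_basic_set (f y) (f ` Y)"
      using \<xi> by (auto simp: tight_basic_set_iff)
  next
    fix \<xi> assume \<xi>: "\<xi> \<in> tight_basic_set (f y) (f ` Y)"
    then have "meets_finite_covers \<xi>" "f y \<in> \<xi>" "f ` Y \<inter> \<xi> = {}"
      by (auto simp: tight_basic_set_iff tight_filters_iff)
    then have "a \<in> \<xi>" using yY(4) unfolding meets_finite_covers_def by blast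
    then show "\<xi> \<in> tight_basic_set a {}" using \<xi> by (simp add: tight_basic_set_iff)
  qed
  also have "\<dots> = re_preimage f (tight_basic_set y Y)"
    by (rule re_preimage_tight_basic_set[symmetric])
  finally show ?thesis using tight_basic_set_in_Tc[OF yY(2)] by blast
qed

lemma tight_basic_set_in_tight_image:
  assumes "a \<le> f z" "finite A"
  shows "tight_basic_set a A \<in> tight_image"
proof -
  have "tight_basic_set a A = tight_basic_set a {} - (\<Union>b\<in>A. tight_basic_set (inf a b) {})"
    by (auto simp: tight_basic_set_iff is_filter_inf_iff tight_filters_is_filter)
  moreover have "tight_basic_set (inf a b) {} \<in> tight_image" for b
    using principal_tight_basic_set_in_tight_image[of "inf a b" z] assms(1) by (simp add: le_infI1)
  ultimately show ?thesis
    using principal_tight_basic_set_in_tight_image[OF assms(1)] assms(2)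
    by (auto intro!: tight_image.Diff tight_image.finite_UN)
qed

lemma tight_basic_set_Int_in_tight_image:
  assumes "finite X" "finite Y"
  shows "tight_basic_set (f x) (f ` X) \<inter> tight_basic_set y Y \<in> tight_image"
proof -
  have "tight_basic_set (f x) (f ` X) \<inter> tight_basic_set y Y
      = tight_basic_set (f x) (f ` X) \<inter> tight_basic_set (inf y (f x)) Y"
    by (auto simp: tight_basic_set_iff is_filter_inf_iff tight_filters_is_filter)
  moreover have "tight_basic_set (f x) (f ` X) \<in> tight_image"
    using tight_basic_set_in_Tc[OF assms(1)] re_preimage_tight_basic_set by (metis image_eqI)
  moreover have "tight_basic_set (inf y (f x)) Y \<in> tight_image"
    using tight_basic_set_in_tight_image[OF inf.cobounded2 assms(2)] .
  ultimately show ?thesis by (simp add: tight_image.Int)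
qed

lemma tight_image_Int_Tc:
  assumes "A \<in> tight_image" "W \<in> Tc"
  shows "A \<inter> W \<in> tight_image"
proof -
  obtain S where S: "finite S" "\<forall>p\<in>S. finite (snd p)"
    "A = (\<Union>p\<in>S. tight_basic_set (f (fst p)) (f ` snd p))"
    using assms(1) by (rule tight_image_finite_Union_tight_basic_set)
  obtain R where R: "finite R" "\<forall>q\<in>R. finite (snd q)"
    "W = (\<Union>q\<in>R. tight_basic_set (fst q) (snd q))"
    using assms(2) by (rule Tc_finite_Union_tight_basic_set)
  have "A \<inter> W = (\<Union>p\<in>S. \<Union>q\<in>R. tight_basic_set (f (fst p)) (f ` snd p)
      \<inter> tight_basic_set (fst q) (snd q))"
    unfolding S(3) R(3) by (rule Int_UN_distrib2)
  moreover have "(\<Union>p\<in>S. \<Union>q\<in>R. tight_basic_set (f (fst p)) (f ` snd p)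
      \<inter> tight_basic_set (fst q) (snd q)) \<in> tight_image"
    using S(1,2) R(1,2) by (intro tight_image.finite_UN tight_basic_set_Int_in_tight_image) auto
  ultimately show ?thesis by simp
qed

end

theorem mainTheorem9:
  fixes f :: "'a::{semilattice_inf,order_bot} \<Rightarrow> 'b::{semilattice_inf,order_bot}"
  assumes "semilattice_embedding f"
    and "preserves_finite_covers f"
    and "\<forall>x::'b. (\<exists>z. x \<le> f z) \<longrightarrow>
           (\<exists>y Y. x \<le> f y \<and> finite Y \<and> (\<forall>yi\<in>Y. yi \<le> y \<and> inf (f yi) x = bot)
                 \<and> finite_cover (insert x (f ` Y)) (f y))"
  shows "tight_embedding f"
proof -
  interpret tight_inclusion f
    using assms by unfold_locales
  show ?thesis
    unfolding tight_embedding_def set_ideal_def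
    using tight_image_subset_Tc tight_image.Un tight_image_Int_Tc by simp
qed

end
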